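(* Let $n\ge1$ and let $T\in\mathcal{L}(\mathcal{H})$ be $n$-EP. Then $T^{2n}\ge 0$ if and only if $T^{2n-1}\omega(T)\ge0$.
   Context: $\mathcal{H}$ is a Hilbert space, $\mathcal{L}(\mathcal{H})$ the bounded operators on it; for $A\in\mathcal{L}(\mathcal{H})$, $A\ge0$ means $A$ is a positive operator ($\langle Ax,x\rangle\ge0$ for all $x$). For $T$ with closed range, $T^\dagger$ is its Moore–Penrose inverse (unique solution of $TT^\dagger T=T$, $T^\dagger TT^\dagger=T^\dagger$, $(T^\dagger T)^*=T^\dagger T$, $(TT^\dagger)^*=TT^\dagger$) and $\omega(T)=T(T^*T)^\dagger=(T^\dagger)^*$ is its Cauchy dual. $T$ is $n$-EP if it has closed range and $T^nT^\dagger=T^\dagger T^n$. *)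

theory Defs
  imports "HOL-Analysis.Analysis"
begin

(* Complex vector spaces (HOL only provides real ones). *)
class complex_vector = real_vector +
  fixes scaleC :: "complex \<Rightarrow> 'a \<Rightarrow> 'a"
  assumes scaleC_add_right: "scaleC a (x + y) = scaleC a x + scaleC a y"
    and scaleC_add_left: "scaleC (a + b) x = scaleC a x + scaleC b x"
    and scaleC_scaleC: "scaleC a (scaleC b x) = scaleC (a * b) x"
    and scaleC_one: "scaleC 1 x = x"
    and scaleR_scaleC: "scaleR r x = scaleC (complex_of_real r) x"

(* Complex Hilbert spaces: complete complex inner product spaces
   (inner product conjugate-linear in the first argument),
   whose norm is induced by the inner product. *)
class chilbert_space = complex_vector + real_normed_vector + complete_space +
  fixes cinner :: "'a \<Rightarrow> 'a \<Rightarrow> complex"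
  assumes cinner_commute: "cinner x y = cnj (cinner y x)"
    and cinner_add_left: "cinner (x + y) z = cinner x z + cinner y z"
    and cinner_scaleC_left: "cinner (scaleC r x) y = cnj r * cinner x y"
    and cinner_ge_zero: "0 \<le> Re (cinner x x)"
    and cinner_eq_zero_iff: "cinner x x = 0 \<longleftrightarrow> x = 0"
    and norm_eq_sqrt_cinner: "norm x = sqrt (Re (cinner x x))"

definition bounded_clinear :: "('a::chilbert_space \<Rightarrow> 'a) \<Rightarrow> bool" where
  "bounded_clinear T \<longleftrightarrow>
     (\<forall>x y. T (x + y) = T x + T y) \<and> (\<forall>c x. T (scaleC c x) = scaleC c (T x)) \<and>
     (\<exists>K. \<forall>x. norm (T x) \<le> norm x * K)"

definition adj :: "('a::chilbert_space \<Rightarrow> 'a) \<Rightarrow> ('a \<Rightarrow> 'a)" where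
  "adj T = (THE S. \<forall>x y. cinner (S x) y = cinner x (T y))"

definition positive_op :: "('a::chilbert_space \<Rightarrow> 'a) \<Rightarrow> bool" where
  "positive_op A \<longleftrightarrow> (\<forall>x. Im (cinner (A x) x) = 0 \<and> 0 \<le> Re (cinner (A x) x))"

definition mp_inv :: "('a::chilbert_space \<Rightarrow> 'a) \<Rightarrow> ('a \<Rightarrow> 'a)" where
  "mp_inv T = (THE S. bounded_clinear S \<and> T \<circ> S \<circ> T = T \<and> S \<circ> T \<circ> S = S \<and>
                      adj (S \<circ> T) = S \<circ> T \<and> adj (T \<circ> S) = T \<circ> S)"

(* Cauchy dual omega(T) = (T^dagger)^* *)
definition cdual :: "('a::chilbert_space \<Rightarrow> 'a) \<Rightarrow> ('a \<Rightarrow> 'a)" where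
  "cdual T = adj (mp_inv T)"

definition n_EP :: "nat \<Rightarrow> ('a::chilbert_space \<Rightarrow> 'a) \<Rightarrow> bool" where
  "n_EP n T \<longleftrightarrow> closed (range T) \<and> (T ^^ n) \<circ> mp_inv T = mp_inv T \<circ> (T ^^ n)"

end

theory Submission
  imports Defs
begin

(* Write S = mp_inv T and w = cdual T = adj S. The Moore-Penrose identities T S T = T and
   adj (T S) = T S, together with the n-EP condition T^n S = S T^n, give
   S T^(m+1) = T^m = T^(m+1) S for every m >= n. Hence T^(2n-1) w = S T^(2n) w = adj w T^(2n) w,
   and, as T S = w (adj T), also T^(2n) = T^(2n+1) S = T (T^(2n-1) w) (adj T). So each of the two
   operators is a congruence adj B A B of the other, and congruences preserve positivity.
   The analytic content is that mp_inv T really is the Moore-Penrose inverse: it is assembled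
   from the orthogonal projections onto the closed range and onto the kernel, and it is bounded
   by the open mapping argument for operators with closed range. *)

context chilbert_space
begin

subclass banach ..

end

section \<open>Complex inner product spaces\<close>

lemma cinner_add_right: "cinner x (y + z) = cinner x y + cinner x (z::'a::chilbert_space)"
  by (metis cinner_add_left cinner_commute complex_cnj_add)

lemma cinner_scaleC_right: "cinner x (scaleC c y) = c * cinner x (y::'a::chilbert_space)"
  by (metis cinner_commute cinner_scaleC_left complex_cnj_cnj complex_cnj_mult)

(* Qualified, since the unqualified additive is the measure-theoretic notion of HOL-Analysis. *)
lemma additive_scaleC: "Modules.additive (scaleC c :: 'a::chilbert_space \<Rightarrow> 'a)"
  by (simp add: Modules.additive_def scaleC_add_right)

lemma additive_cinner_left: "Modules.additive (\<lambda>x::'a::chilbert_space. cinner x y)"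
  by (simp add: Modules.additive_def cinner_add_left)

lemma additive_cinner_right: "Modules.additive (cinner (x::'a::chilbert_space))"
  by (simp add: Modules.additive_def cinner_add_right)

lemmas scaleC_zero [simp] = additive.zero[OF additive_scaleC]
  and scaleC_diff = additive.diff[OF additive_scaleC]
  and cinner_zero_left [simp] = additive.zero[OF additive_cinner_left]
  and cinner_diff_left = additive.diff[OF additive_cinner_left]
  and cinner_zero_right [simp] = additive.zero[OF additive_cinner_right]
  and cinner_minus_right = additive.minus[OF additive_cinner_right]
  and cinner_diff_right = additive.diff[OF additive_cinner_right]

lemma cinner_self: "cinner x x = of_real ((norm (x::'a::chilbert_space))^2)"
proof -
  have "Im (cinner x x) = 0"
    using arg_cong[OF cinner_commute[of x x], of Im] by simp
  then show ?thesis
    by (simp add: complex_eq_iff norm_eq_sqrt_cinner cinner_ge_zero)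
qed

lemma norm_sq_eq_Re_cinner: "(norm x)^2 = Re (cinner x (x::'a::chilbert_space))"
  by (simp add: cinner_self)

lemma norm_add_sq:
  "(norm (x + y))^2 = (norm x)^2 + 2 * Re (cinner x y) + (norm (y::'a::chilbert_space))^2"
proof -
  have "Re (cinner y x) = Re (cinner x y)"
    by (subst cinner_commute) simp
  then show ?thesis
    by (simp add: norm_sq_eq_Re_cinner cinner_add_left cinner_add_right)
qed

lemma norm_diff_sq:
  "(norm (x - y))^2 = (norm x)^2 - 2 * Re (cinner x y) + (norm (y::'a::chilbert_space))^2"
  using norm_add_sq[of x "- y"] by (simp add: cinner_minus_right)

lemma norm_scaleC: "norm (scaleC c x) = cmod c * norm (x::'a::chilbert_space)"
proof -
  have "(norm (scaleC c x))^2 = Re ((c * cnj c) * cinner x x)"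
    by (simp add: norm_sq_eq_Re_cinner cinner_scaleC_left cinner_scaleC_right ac_simps)
  also have "\<dots> = (cmod c * norm x)^2"
    by (simp only: complex_norm_square[symmetric] cinner_self of_real_mult[symmetric]
        Re_complex_of_real power_mult_distrib)
  finally show ?thesis
    by simp
qed

lemma norm_cinner_le: "cmod (cinner x y) \<le> norm x * norm (y::'a::chilbert_space)"
proof (cases "x = 0")
  case True
  then show ?thesis
    by simp
next
  case False
  then have nx: "norm x > 0"
    by simp
  define a where "a = cinner x y / of_real ((norm x)^2)"
  have "cinner x (y - scaleC a x) = 0"
    using nx by (simp add: a_def cinner_diff_right cinner_scaleC_right cinner_self)
  then have "cinner (scaleC a x) (y - scaleC a x) = 0"
    by (simp add: cinner_scaleC_left)
  then have "(norm y)^2 = (norm (scaleC a x))^2 + (norm (y - scaleC a x))^2"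
    using norm_add_sq[of "scaleC a x" "y - scaleC a x"] by simp
  then have "(norm (scaleC a x))^2 \<le> (norm y)^2"
    by simp
  then have "norm (scaleC a x) \<le> norm y"
    by (rule power2_le_imp_le) simp
  moreover have "cmod a = cmod (cinner x y) / (norm x)^2"
    by (simp add: a_def norm_divide del: of_real_power)
  then have "norm (scaleC a x) = cmod (cinner x y) / norm x"
    using nx by (simp add: norm_scaleC power2_eq_square)
  ultimately show ?thesis
    using nx by (simp add: divide_le_eq mult.commute)
qed

lemma cinner_eq_imp_eq_left: "(\<And>z. cinner x z = cinner y z) \<Longrightarrow> x = (y::'a::chilbert_space)"
  using cinner_eq_zero_iff[of "x - y"] by (simp add: cinner_diff_left)

section \<open>Orthogonal projections onto closed subspaces\<close>

definition csubspace :: "'a::chilbert_space set \<Rightarrow> bool" where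
  "csubspace M \<longleftrightarrow> 0 \<in> M \<and> (\<forall>x\<in>M. \<forall>y\<in>M. x + y \<in> M) \<and> (\<forall>c. \<forall>x\<in>M. scaleC c x \<in> M)"

lemma csubspace_0: "csubspace M \<Longrightarrow> 0 \<in> M"
  and csubspace_add: "csubspace M \<Longrightarrow> x \<in> M \<Longrightarrow> y \<in> M \<Longrightarrow> x + y \<in> M"
  and csubspace_scaleC: "csubspace M \<Longrightarrow> x \<in> M \<Longrightarrow> scaleC c x \<in> M"
  by (simp_all add: csubspace_def)

lemma csubspace_scaleR: "csubspace M \<Longrightarrow> x \<in> M \<Longrightarrow> scaleR r x \<in> M"
  by (simp add: csubspace_scaleC scaleR_scaleC)

lemma csubspace_diff: "csubspace M \<Longrightarrow> x \<in> M \<Longrightarrow> y \<in> M \<Longrightarrow> x - y \<in> M"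
  using csubspace_add csubspace_scaleR[of M y "-1"] by fastforce

lemma norm_diff_midpoint_sq:
  fixes a b x :: "'a::chilbert_space"
  shows "(norm (a - b))^2 =
    2 * (norm (x - a))^2 + 2 * (norm (x - b))^2 - 4 * (norm (x - scaleR (1/2) (a + b)))^2"
proof -
  define u v where "u = x - a" and "v = x - b"
  have "scaleR (1/2) (u + v) = scaleR (1/2) (x + x) - scaleR (1/2) (a + b)"
    by (simp add: u_def v_def algebra_simps)
  then have "x - scaleR (1/2) (a + b) = scaleR (1/2) (u + v)"
    by (simp flip: scaleR_2)
  then have "(norm (x - scaleR (1/2) (a + b)))^2 = (norm (u + v))^2 / 4"
    by (simp add: power_divide)
  moreover have "(norm (a - b))^2 = (norm (v - u))^2"
    by (simp add: u_def v_def)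
  moreover have "Re (cinner v u) = Re (cinner u v)"
    by (subst cinner_commute) simp
  ultimately show ?thesis
    using norm_add_sq[of u v] norm_diff_sq[of v u] unfolding u_def v_def by linarith
qed

lemma csubspace_minimizing_sequence_Cauchy:
  fixes M :: "'a::chilbert_space set"
  assumes "csubspace M" and m_in: "\<And>k. m k \<in> M" and d_le: "\<And>m'. m' \<in> M \<Longrightarrow> d \<le> norm (x - m')"
    and lim: "(\<lambda>k. norm (x - m k)) \<longlonglongrightarrow> d"
  shows "Cauchy m"
proof (rule metric_CauchyI)
  fix e :: real
  assume "e > 0"
  have "d \<ge> 0"
    by (rule LIMSEQ_le_const[OF lim]) simp
  have "(\<lambda>k. (norm (x - m k))^2) \<longlonglongrightarrow> d^2"
    using lim by (rule tendsto_power)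
  moreover have "d^2 < d^2 + e^2 / 4"
    using \<open>e > 0\<close> by simp
  ultimately have "eventually (\<lambda>k. (norm (x - m k))^2 < d^2 + e^2 / 4) sequentially"
    by (rule order_tendstoD(2))
  then obtain N where N: "\<And>k. k \<ge> N \<Longrightarrow> (norm (x - m k))^2 < d^2 + e^2 / 4"
    by (auto simp: eventually_sequentially)
  have "dist (m i) (m j) < e" if "i \<ge> N" "j \<ge> N" for i j
  proof -
    have "scaleR (1/2) (m i + m j) \<in> M"
      by (intro csubspace_scaleR csubspace_add assms)
    then have "d^2 \<le> (norm (x - scaleR (1/2) (m i + m j)))^2"
      using d_le \<open>d \<ge> 0\<close> by (simp add: power_mono)
    then have "(norm (m i - m j))^2 < e^2"
      using norm_diff_midpoint_sq[of "m i" "m j" x] N[OF that(1)] N[OF that(2)] by linarith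
    then show ?thesis
      using \<open>e > 0\<close> by (simp add: dist_norm power2_less_imp_less)
  qed
  then show "\<exists>N. \<forall>i\<ge>N. \<forall>j\<ge>N. dist (m i) (m j) < e"
    by blast
qed

lemma csubspace_closest_point_exists:
  fixes M :: "'a::chilbert_space set"
  assumes M: "csubspace M" "closed M"
  shows "\<exists>m\<in>M. \<forall>m'\<in>M. norm (x - m) \<le> norm (x - m')"
proof -
  define d where "d = Inf ((\<lambda>m. norm (x - m)) ` M)"
  have d_le: "d \<le> norm (x - m)" if "m \<in> M" for m
    unfolding d_def by (rule cINF_lower[OF bdd_belowI[where m = 0] that]) auto
  have "\<exists>m\<in>M. norm (x - m) < d + inverse (real (Suc k))" for k
    using cInf_lessD[of "(\<lambda>m. norm (x - m)) ` M" "d + inverse (real (Suc k))"] csubspace_0[OF M(1)]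
    by (auto simp: d_def)
  then obtain m where m_in: "\<And>k. m k \<in> M"
    and m_close: "\<And>k. norm (x - m k) < d + inverse (real (Suc k))"
    by metis
  have "(\<lambda>k. d + inverse (real (Suc k))) \<longlonglongrightarrow> d"
    using tendsto_add[OF tendsto_const LIMSEQ_inverse_real_of_nat, of d] by simp
  have lim: "(\<lambda>k. norm (x - m k)) \<longlonglongrightarrow> d"
    by (rule real_tendsto_sandwich[OF _ _ tendsto_const \<open>_ \<longlonglongrightarrow> d\<close>])
      (use d_le m_in m_close in \<open>auto intro!: always_eventually less_imp_le\<close>)
  have "Cauchy m"
    using M(1) m_in d_le lim by (rule csubspace_minimizing_sequence_Cauchy)
  then obtain L where L: "m \<longlonglongrightarrow> L"
    by (auto simp: Cauchy_convergent_iff convergent_def)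
  have "L \<in> M"
    using closed_sequentially[OF M(2)] m_in L by blast
  moreover have "(\<lambda>k. norm (x - m k)) \<longlonglongrightarrow> norm (x - L)"
    by (intro tendsto_intros L)
  then have "norm (x - L) = d"
    using LIMSEQ_unique lim by blast
  ultimately show ?thesis
    using d_le by auto
qed

lemma csubspace_closest_point_orthogonal:
  fixes M :: "'a::chilbert_space set"
  assumes "csubspace M" and "m \<in> M" and closest: "\<forall>m'\<in>M. norm (x - m) \<le> norm (x - m')"
    and "u \<in> M"
  shows "cinner u (x - m) = 0"
proof (rule ccontr)
  define w c where "w = x - m" and "c = cinner u w"
  assume "cinner u (x - m) \<noteq> 0"
  then have "c \<noteq> 0" and "u \<noteq> 0"
    by (auto simp: c_def w_def)
  then have nu: "norm u > 0"
    by simp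
  define a where "a = c / of_real ((norm u)^2)"
  have "cinner w (scaleC a u) = of_real ((cmod c)^2 / (norm u)^2)"
    by (simp add: a_def c_def cinner_scaleC_right cinner_commute[of w u] flip: complex_norm_square)
  moreover have "cmod a = cmod c / (norm u)^2"
    by (simp add: a_def norm_divide del: of_real_power)
  then have "norm (scaleC a u) = cmod c / norm u"
    using nu by (simp add: norm_scaleC power2_eq_square)
  ultimately have "(norm (w - scaleC a u))^2 = (norm w)^2 - (cmod c)^2 / (norm u)^2"
    by (simp add: norm_diff_sq power_divide)
  also have "\<dots> < (norm w)^2"
    using \<open>c \<noteq> 0\<close> nu by simp
  finally have "norm (w - scaleC a u) < norm w"
    by (rule power2_less_imp_less) simp
  moreover have "m + scaleC a u \<in> M"
    by (intro csubspace_add csubspace_scaleC assms)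
  then have "norm (x - m) \<le> norm (x - (m + scaleC a u))"
    using closest by blast
  then have "norm w \<le> norm (w - scaleC a u)"
    by (simp add: w_def diff_diff_eq)
  ultimately show False
    by simp
qed

definition proj :: "'a::chilbert_space set \<Rightarrow> 'a \<Rightarrow> 'a" where
  "proj M x = (THE m. m \<in> M \<and> (\<forall>u\<in>M. cinner u (x - m) = 0))"

lemma orthogonal_decomposition_unique:
  fixes M :: "'a::chilbert_space set"
  assumes "csubspace M"
    and "m \<in> M" "\<forall>u\<in>M. cinner u (x - m) = 0"
    and "m' \<in> M" "\<forall>u\<in>M. cinner u (x - m') = 0"
  shows "m = m'"
proof -
  have "m - m' \<in> M"
    by (intro csubspace_diff assms)
  then have "cinner (m - m') (x - m') - cinner (m - m') (x - m) = 0"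
    using assms by simp
  then have "cinner (m - m') (m - m') = 0"
    by (simp add: cinner_diff_right)
  then show ?thesis
    by (simp add: cinner_eq_zero_iff)
qed

lemma proj_eqI:
  assumes "csubspace M" and "m \<in> M" and "\<forall>u\<in>M. cinner u (x - m) = 0"
  shows "proj M x = m"
  unfolding proj_def
  by (rule the_equality) (use assms orthogonal_decomposition_unique in blast)+

lemma
  assumes "csubspace M" and "closed M"
  shows proj_in: "proj M x \<in> M"
    and proj_orthogonal: "u \<in> M \<Longrightarrow> cinner u (x - proj M x) = 0"
proof -
  obtain m where "m \<in> M" and "\<forall>m'\<in>M. norm (x - m) \<le> norm (x - m')"
    using csubspace_closest_point_exists[OF assms] by blast
  then have "proj M x = m" and "\<forall>u\<in>M. cinner u (x - m) = 0"
    using csubspace_closest_point_orthogonal[OF assms(1)] proj_eqI[OF assms(1)] by blast+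
  then show "proj M x \<in> M" and "u \<in> M \<Longrightarrow> cinner u (x - proj M x) = 0"
    using \<open>m \<in> M\<close> by auto
qed

lemma proj_id: "csubspace M \<Longrightarrow> m \<in> M \<Longrightarrow> proj M m = m"
  by (rule proj_eqI) auto

lemma proj_add:
  assumes "csubspace M" and "closed M"
  shows "proj M (x + y) = proj M x + proj M y"
proof (rule proj_eqI[OF assms(1)])
  show "proj M x + proj M y \<in> M"
    by (intro csubspace_add proj_in assms)
  have "x + y - (proj M x + proj M y) = (x - proj M x) + (y - proj M y)"
    by simp
  then show "\<forall>u\<in>M. cinner u (x + y - (proj M x + proj M y)) = 0"
    by (simp only: cinner_add_right) (simp add: proj_orthogonal[OF assms])
qed

lemma proj_scaleC:
  assumes "csubspace M" and "closed M"
  shows "proj M (scaleC c x) = scaleC c (proj M x)"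
proof (rule proj_eqI[OF assms(1)])
  show "scaleC c (proj M x) \<in> M"
    by (intro csubspace_scaleC proj_in assms)
  show "\<forall>u\<in>M. cinner u (scaleC c x - scaleC c (proj M x)) = 0"
    by (simp add: proj_orthogonal[OF assms] cinner_scaleC_right flip: scaleC_diff)
qed

lemma proj_self_adjoint:
  assumes "csubspace M" and "closed M"
  shows "cinner (proj M x) y = cinner x (proj M y)"
proof -
  have "cinner (proj M x) (y - proj M y) = 0"
    by (intro proj_orthogonal proj_in assms)
  moreover have "cinner (proj M y) (x - proj M x) = 0"
    by (intro proj_orthogonal proj_in assms)
  then have "cinner (x - proj M x) (proj M y) = 0"
    by (subst cinner_commute) simp
  ultimately show ?thesis
    by (simp add: cinner_diff_left cinner_diff_right)
qed

lemma
  assumes "csubspace M" and "closed M"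
  shows norm_proj_le: "norm (proj M x) \<le> norm x"
    and norm_diff_proj_le: "norm (x - proj M x) \<le> norm x"
proof -
  have "cinner (proj M x) (x - proj M x) = 0"
    by (intro proj_orthogonal proj_in assms)
  then have "(norm x)^2 = (norm (proj M x))^2 + (norm (x - proj M x))^2"
    using norm_add_sq[of "proj M x" "x - proj M x"] by simp
  then have "(norm (proj M x))^2 \<le> (norm x)^2" and "(norm (x - proj M x))^2 \<le> (norm x)^2"
    by simp_all
  then show "norm (proj M x) \<le> norm x" and "norm (x - proj M x) \<le> norm x"
    by (simp_all add: power2_le_iff_abs_le)
qed

section \<open>Bounded operators and adjoints\<close>

lemma bounded_clinear_add: "bounded_clinear T \<Longrightarrow> T (x + y) = T x + T y"
  and bounded_clinear_scaleC: "bounded_clinear T \<Longrightarrow> T (scaleC c x) = scaleC c (T x)"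
  by (simp_all add: bounded_clinear_def)

lemma bounded_clinear_bounded_linear:
  assumes "bounded_clinear T"
  shows "bounded_linear T"
proof -
  obtain K where "\<forall>x. norm (T x) \<le> norm x * K"
    using assms by (auto simp: bounded_clinear_def)
  then show ?thesis
    using assms
    by (intro bounded_linear_intro[of T K]) (simp_all add: bounded_clinear_def scaleR_scaleC)
qed

lemma bounded_clinear_zero: "bounded_clinear T \<Longrightarrow> T 0 = 0"
  by (rule linear_0[OF bounded_linear.linear[OF bounded_clinear_bounded_linear]])

lemma bounded_clinear_diff: "bounded_clinear T \<Longrightarrow> T (x - y) = T x - T y"
  by (rule linear_diff[OF bounded_linear.linear[OF bounded_clinear_bounded_linear]])

lemma bounded_clinear_compose:
  assumes "bounded_clinear S" and "bounded_clinear T"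
  shows "bounded_clinear (S \<circ> T)"
proof -
  have "bounded_linear (S \<circ> T)"
    using bounded_linear_compose[OF assms[THEN bounded_clinear_bounded_linear]]
    by (simp add: o_def)
  then obtain K where "\<forall>x. norm ((S \<circ> T) x) \<le> norm x * K"
    using bounded_linear.bounded by blast
  then show ?thesis
    using assms unfolding bounded_clinear_def comp_def by simp blast
qed

lemma range_csubspace:
  assumes "bounded_clinear T"
  shows "csubspace (range T)"
proof -
  have "0 \<in> range T"
    using bounded_clinear_zero[OF assms] by (metis rangeI)
  moreover have "T a + T b \<in> range T" and "scaleC c (T a) \<in> range T" for a b c
    by (simp_all flip: bounded_clinear_add[OF assms] bounded_clinear_scaleC[OF assms])
  ultimately show ?thesis
    by (auto simp: csubspace_def)
qed

lemma kernel_csubspace: "bounded_clinear T \<Longrightarrow> csubspace {x. T x = 0}"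
  by (simp add: csubspace_def bounded_clinear_zero bounded_clinear_add bounded_clinear_scaleC)

lemma kernel_closed: "bounded_clinear T \<Longrightarrow> closed {x. T x = 0}"
  by (intro closed_Collect_eq continuous_on_const linear_continuous_on bounded_clinear_bounded_linear)

lemma functional_eq_cinner_kernel_orthogonal:
  fixes f :: "'a::chilbert_space \<Rightarrow> complex"
  assumes add: "\<And>x y. f (x + y) = f x + f y" and scale: "\<And>c x. f (scaleC c x) = c * f x"
    and z_orth: "\<And>u. f u = 0 \<Longrightarrow> cinner u z = 0" and "z \<noteq> 0"
  shows "f x = cinner (scaleC (cnj (f z / cinner z z)) z) x"
proof -
  have "Modules.additive f"
    by (simp add: Modules.additive_def add)
  then have "f (scaleC (f x) z - scaleC (f z) x) = 0"
    by (simp add: additive.diff scale)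
  then have "cinner (scaleC (f x) z - scaleC (f z) x) z = 0"
    by (rule z_orth)
  then have "cinner z (scaleC (f x) z - scaleC (f z) x) = 0"
    by (subst cinner_commute) simp
  then have "f x * cinner z z = f z * cinner z x"
    by (simp add: cinner_diff_right cinner_scaleC_right)
  moreover have "cinner z z \<noteq> 0"
    using \<open>z \<noteq> 0\<close> by (simp add: cinner_eq_zero_iff)
  ultimately show ?thesis
    by (simp add: cinner_scaleC_left field_simps)
qed

lemma riesz_representation:
  fixes f :: "'a::chilbert_space \<Rightarrow> complex"
  assumes add: "\<And>x y. f (x + y) = f x + f y" and scale: "\<And>c x. f (scaleC c x) = c * f x"
    and bounded: "\<And>x. cmod (f x) \<le> norm x * K"
  shows "\<exists>y. \<forall>x. f x = cinner y x"
proof (cases "\<forall>x. f x = 0")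
  case True
  then show ?thesis
    by (intro exI[of _ 0]) simp
next
  case False
  then obtain x0 where "f x0 \<noteq> 0"
    by blast
  interpret f: bounded_linear f
    by (rule bounded_linear_intro[of f K]) (simp_all add: add scale bounded scaleR_scaleC scaleR_conv_of_real)
  define N where "N = {x. f x = 0}"
  have N: "csubspace N" "closed N"
    unfolding N_def csubspace_def
    by (auto simp: add scale intro!: closed_Collect_eq linear_continuous_on f.bounded_linear_axioms)
  define z where "z = x0 - proj N x0"
  have "f (proj N x0) = 0"
    using proj_in[OF N] by (simp add: N_def)
  then have "f z \<noteq> 0"
    using \<open>f x0 \<noteq> 0\<close> by (simp add: z_def f.diff)
  then have "z \<noteq> 0"
    by auto
  moreover have "cinner u z = 0" if "f u = 0" for u
    unfolding z_def using proj_orthogonal[OF N] that by (simp add: N_def)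
  ultimately have "f x = cinner (scaleC (cnj (f z / cinner z z)) z) x" for x
    by (rule functional_eq_cinner_kernel_orthogonal[OF add scale, rotated])
  then show ?thesis
    by blast
qed

definition is_adj :: "('a::chilbert_space \<Rightarrow> 'a) \<Rightarrow> ('a \<Rightarrow> 'a) \<Rightarrow> bool" where
  "is_adj S T \<longleftrightarrow> (\<forall>x y. cinner (S x) y = cinner x (T y))"

lemma is_adj_unique: "is_adj S1 T \<Longrightarrow> is_adj S2 T \<Longrightarrow> S1 = S2"
  unfolding is_adj_def by (metis cinner_eq_imp_eq_left ext)

lemma adj_eqI: "is_adj S T \<Longrightarrow> adj T = S"
  unfolding adj_def is_adj_def[symmetric]
  by (rule the_equality) (auto intro: is_adj_unique)

lemma is_adj_sym: "is_adj S T \<Longrightarrow> is_adj T S"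
  unfolding is_adj_def by (metis cinner_commute)

lemma is_adj_comp: "is_adj S1 T1 \<Longrightarrow> is_adj S2 T2 \<Longrightarrow> is_adj (S2 \<circ> S1) (T1 \<circ> T2)"
  by (simp add: is_adj_def)

lemma is_adj_adj:
  assumes T: "bounded_clinear T"
  shows "is_adj (adj T) T"
proof -
  obtain K where K: "\<And>x. norm (T x) \<le> norm x * K"
    using T by (auto simp: bounded_clinear_def)
  have "\<exists>y. \<forall>z. cinner x (T z) = cinner y z" for x
  proof (rule riesz_representation)
    show "cinner x (T (a + b)) = cinner x (T a) + cinner x (T b)" for a b
      by (simp add: bounded_clinear_add[OF T] cinner_add_right)
    show "cinner x (T (scaleC c a)) = c * cinner x (T a)" for c a
      by (simp add: bounded_clinear_scaleC[OF T] cinner_scaleC_right)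
    show "cmod (cinner x (T a)) \<le> norm a * (norm x * K)" for a
      using norm_cinner_le[of x "T a"] mult_left_mono[OF K[of a] norm_ge_zero[of x]]
      by (simp add: algebra_simps)
  qed
  then obtain S where "\<forall>x z. cinner x (T z) = cinner (S x) z"
    by metis
  then have "is_adj S T"
    by (simp add: is_adj_def)
  then show ?thesis
    by (simp add: adj_eqI)
qed

lemma adj_eq_self_iff: "bounded_clinear A \<Longrightarrow> adj A = A \<longleftrightarrow> is_adj A A"
  using is_adj_adj adj_eqI by metis

section \<open>Open mapping for bounded linear maps with closed range\<close>

lemma closed_range_Baire_interior:
  fixes T :: "'a::real_normed_vector \<Rightarrow> 'b::banach"
  assumes "closed (range T)"
  obtains k :: nat
  where "(top_of_set (range T)) interior_of (range T \<inter> closure (T ` cball 0 (real k))) \<noteq> {}"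
proof -
  define R where "R = range T"
  define F where "F k = R \<inter> closure (T ` cball 0 (real k))" for k :: nat
  have "\<Union> (range F) = R"
  proof
    show "R \<subseteq> \<Union> (range F)"
    proof
      fix y
      assume "y \<in> R"
      then obtain x where "y = T x"
        by (auto simp: R_def)
      moreover obtain k :: nat where "norm x \<le> real k"
        using real_arch_simple by blast
      ultimately have "y \<in> F k"
        using \<open>y \<in> R\<close> closure_subset by (fastforce simp: F_def)
      then show "y \<in> \<Union> (range F)"
        by blast
    qed
  qed (auto simp: F_def)
  moreover have "(top_of_set R) interior_of R = R"
    by (metis interior_of_topspace topspace_euclidean_subtopology)
  ultimately have nonempty: "(top_of_set R) interior_of \<Union> (range F) \<noteq> {}"
    by (simp add: R_def)
  have "\<exists>k. (top_of_set R) interior_of F k \<noteq> {}"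
  proof (rule ccontr)
    assume "\<nexists>k. (top_of_set R) interior_of F k \<noteq> {}"
    moreover have "completely_metrizable_space (top_of_set R)"
      unfolding R_def
      by (rule completely_metrizable_space_closedin[OF completely_metrizable_space_euclidean])
        (use assms closed_closedin in blast)
    moreover have "closedin (top_of_set R) (F k)" for k
      unfolding F_def by (rule closedin_closed_Int) simp
    ultimately have "(top_of_set R) interior_of \<Union> (range F) = {}"
      by (intro Baire_category_alt) auto
    with nonempty show False
      by blast
  qed
  then show ?thesis
    using that by (auto simp: F_def R_def)
qed

lemma closed_range_Baire:
  fixes T :: "'a::real_normed_vector \<Rightarrow> 'b::banach"
  assumes "closed (range T)"
  obtains k :: nat and y0 e where "y0 \<in> range T" and "e > 0"
    and "range T \<inter> ball y0 e \<subseteq> closure (T ` cball 0 (real k))"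
proof -
  define R where "R = range T"
  obtain k :: nat where "(top_of_set R) interior_of (R \<inter> closure (T ` cball 0 (real k))) \<noteq> {}"
    using closed_range_Baire_interior[OF assms] by (auto simp: R_def)
  then obtain y0 where y0: "y0 \<in> (top_of_set R) interior_of (R \<inter> closure (T ` cball 0 (real k)))"
    by blast
  moreover have "openin (top_of_set R) ((top_of_set R) interior_of (R \<inter> closure (T ` cball 0 (real k))))"
    by (rule openin_interior_of)
  then obtain V where "open V"
    and V: "(top_of_set R) interior_of (R \<inter> closure (T ` cball 0 (real k))) = R \<inter> V"
    unfolding openin_open by blast
  ultimately obtain e where "e > 0" and "ball y0 e \<subseteq> V"
    using open_contains_ball by blast
  then have "R \<inter> ball y0 e \<subseteq> closure (T ` cball 0 (real k))"
    using V interior_of_subset[of "top_of_set R" "R \<inter> closure (T ` cball 0 (real k))"] by blast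
  moreover have "y0 \<in> R"
    using y0 V by blast
  ultimately show ?thesis
    using that \<open>e > 0\<close> by (auto simp: R_def)
qed

lemma closed_range_approximate_preimage_local:
  fixes T :: "'a::real_normed_vector \<Rightarrow> 'b::banach"
  assumes T: "bounded_linear T" and "closed (range T)"
  obtains e c where "e > 0"
    and "\<And>y \<eta>. y \<in> range T \<Longrightarrow> norm y < e \<Longrightarrow> \<eta> > 0 \<Longrightarrow> \<exists>x. norm x \<le> c \<and> norm (y - T x) < \<eta>"
proof -
  interpret T: bounded_linear T
    by (fact T)
  obtain k :: nat and y0 e where y0: "y0 \<in> range T" and "e > 0"
    and ball: "range T \<inter> ball y0 e \<subseteq> closure (T ` cball 0 (real k))"
    by (rule closed_range_Baire[OF assms(2)])
  have "\<exists>x. norm x \<le> 2 * real k \<and> norm (y - T x) < \<eta>"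
    if y: "y \<in> range T" "norm y < e" and "\<eta> > 0" for y \<eta>
  proof -
    obtain a b where "y0 = T a" and "y = T b"
      using y0 y(1) by blast
    then have "y0 + y \<in> range T"
      by (simp flip: T.add)
    then have "y0 + y \<in> range T \<inter> ball y0 e" and "y0 \<in> range T \<inter> ball y0 e"
      using y0 y(2) \<open>e > 0\<close> by (simp_all add: dist_norm)
    then have "y0 + y \<in> closure (T ` cball 0 (real k))" and "y0 \<in> closure (T ` cball 0 (real k))"
      using ball by blast+
    then obtain z1 z2 where "z1 \<in> T ` cball 0 (real k)" "dist z1 (y0 + y) < \<eta> / 2"
      and "z2 \<in> T ` cball 0 (real k)" "dist z2 y0 < \<eta> / 2"
      using half_gt_zero[OF \<open>\<eta> > 0\<close>] unfolding closure_approachable by blast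
    then obtain x1 x2 where x: "x1 \<in> cball 0 (real k)" "x2 \<in> cball 0 (real k)"
      and "norm (y0 + y - T x1) < \<eta> / 2" and "norm (y0 - T x2) < \<eta> / 2"
      by (auto simp: dist_norm norm_minus_commute)
    moreover have "y - T (x1 - x2) = (y0 + y - T x1) - (y0 - T x2)"
      by (simp add: T.diff algebra_simps)
    then have "norm (y - T (x1 - x2)) \<le> norm (y0 + y - T x1) + norm (y0 - T x2)"
      by (metis norm_triangle_ineq4)
    ultimately have "norm (y - T (x1 - x2)) < \<eta>"
      by linarith
    moreover have "norm (x1 - x2) \<le> 2 * real k"
      using x norm_triangle_ineq4[of x1 x2] by simp
    ultimately show ?thesis
      by blast
  qed
  then show ?thesis
    by (rule that[OF \<open>e > 0\<close>])
qed

lemma closed_range_approximate_preimage: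
  fixes T :: "'a::real_normed_vector \<Rightarrow> 'b::banach"
  assumes T: "bounded_linear T" and "closed (range T)"
  obtains M where
    "\<And>y \<eta>. y \<in> range T \<Longrightarrow> \<eta> > 0 \<Longrightarrow> \<exists>x. norm x \<le> M * norm y \<and> norm (y - T x) < \<eta>"
proof -
  interpret T: bounded_linear T
    by (fact T)
  obtain e c where "e > 0" and local:
    "\<And>y \<eta>. y \<in> range T \<Longrightarrow> norm y < e \<Longrightarrow> \<eta> > 0 \<Longrightarrow> \<exists>x. norm x \<le> c \<and> norm (y - T x) < \<eta>"
    using closed_range_approximate_preimage_local[OF assms] by blast
  have "\<exists>x. norm x \<le> (2 * c / e) * norm y \<and> norm (y - T x) < \<eta>"
    if "y \<in> range T" and "\<eta> > 0" for y \<eta>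
  proof (cases "y = 0")
    case True
    then show ?thesis
      using \<open>\<eta> > 0\<close> by (intro exI[of _ 0]) simp
  next
    case False
    define l where "l = e / (2 * norm y)"
    have "l > 0"
      using \<open>e > 0\<close> False by (simp add: l_def)
    have "scaleR l y \<in> range T"
      using \<open>y \<in> range T\<close> by (metis T.scaleR rangeE rangeI)
    moreover have "norm (scaleR l y) < e"
      using \<open>l > 0\<close> \<open>e > 0\<close> False by (simp add: l_def)
    ultimately obtain x where x: "norm x \<le> c" "norm (scaleR l y - T x) < l * \<eta>"
      using local \<open>l > 0\<close> \<open>\<eta> > 0\<close> by (meson mult_pos_pos)
    have "y - T (scaleR (1 / l) x) = scaleR (1 / l) (scaleR l y - T x)"
      using \<open>l > 0\<close> by (simp add: T.scaleR algebra_simps)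
    then have "norm (y - T (scaleR (1 / l) x)) < \<eta>"
      using x(2) \<open>l > 0\<close> by (simp add: divide_less_eq mult.commute)
    moreover have "norm (scaleR (1 / l) x) \<le> (2 * c / e) * norm y"
      using x(1) \<open>l > 0\<close> \<open>e > 0\<close> False by (simp add: l_def field_simps)
    ultimately show ?thesis
      by blast
  qed
  then show ?thesis
    by (rule that)
qed

lemma approximate_preimage_residuals:
  fixes T :: "'a::real_normed_vector \<Rightarrow> 'b::real_normed_vector"
  assumes T: "bounded_linear T"
    and approx: "\<And>y \<eta>. y \<in> range T \<Longrightarrow> \<eta> > 0 \<Longrightarrow> \<exists>x. norm x \<le> M * norm y \<and> norm (y - T x) < \<eta>"
    and y: "y \<in> range T" "y \<noteq> 0"
  obtains xs r where "r 0 = y" and "\<And>j. r (Suc j) = r j - T (xs j)"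
    and "\<And>j. norm (r j) \<le> norm y / 2 ^ j" and "\<And>j. norm (xs j) \<le> M * norm (r j)"
proof -
  interpret T: bounded_linear T
    by (fact T)
  define e where "e j = norm y / 2 ^ Suc j" for j :: nat
  have "e j > 0" for j
    using y(2) by (simp add: e_def)
  define g where "g r \<eta> = (SOME x. norm x \<le> M * norm r \<and> norm (r - T x) < \<eta>)" for r \<eta>
  have g: "norm (g r \<eta>) \<le> M * norm r \<and> norm (r - T (g r \<eta>)) < \<eta>" if "r \<in> range T" "\<eta> > 0" for r \<eta>
    unfolding g_def by (rule someI_ex) (use approx that in blast)
  define r where "r = rec_nat y (\<lambda>j rj. rj - T (g rj (e j)))"
  define xs where "xs j = g (r j) (e j)" for j
  have r_Suc: "r (Suc j) = r j - T (xs j)" for j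
    by (simp add: r_def xs_def)
  have r: "r j \<in> range T \<and> norm (r j) \<le> norm y / 2 ^ j" for j
  proof (induction j)
    case 0
    then show ?case
      using y(1) by (simp add: r_def)
  next
    case (Suc j)
    then have "norm (r (Suc j)) < e j"
      using g \<open>e j > 0\<close> by (simp add: r_Suc xs_def)
    moreover have "r (Suc j) \<in> range T"
      using Suc by (auto simp: r_Suc simp flip: T.diff)
    ultimately show ?case
      by (simp add: e_def)
  qed
  show ?thesis
  proof (rule that)
    show "r 0 = y"
      by (simp add: r_def)
    show "norm (xs j) \<le> M * norm (r j)" for j
      unfolding xs_def using g[OF conjunct1[OF r] \<open>e j > 0\<close>] by simp
  qed (use r r_Suc in simp_all)
qed

lemma exact_preimage_from_approximate:
  fixes T :: "'a::banach \<Rightarrow> 'b::real_normed_vector"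
  assumes T: "bounded_linear T"
    and approx: "\<And>y \<eta>. y \<in> range T \<Longrightarrow> \<eta> > 0 \<Longrightarrow> \<exists>x. norm x \<le> M * norm y \<and> norm (y - T x) < \<eta>"
    and "y \<in> range T"
  shows "\<exists>x. T x = y \<and> norm x \<le> 2 * M * norm y"
proof (cases "y = 0")
  case True
  then show ?thesis
    by (intro exI[of _ 0]) (simp add: linear_simps T)
next
  case False
  interpret T: bounded_linear T
    by (fact T)
  obtain xs r where r_0: "r 0 = y" and r_Suc: "\<And>j. r (Suc j) = r j - T (xs j)"
    and r: "\<And>j. norm (r j) \<le> norm y / 2 ^ j" and xs: "\<And>j. norm (xs j) \<le> M * norm (r j)"
    using approximate_preimage_residuals[OF T approx \<open>y \<in> range T\<close> False] by blast
  have "0 \<le> M * norm y"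
    using order_trans[OF norm_ge_zero xs[of 0]] by (simp add: r_0)
  then have "M \<ge> 0"
    using False by (simp add: zero_le_mult_iff)
  have bound: "norm (xs j) \<le> M * norm y * (1/2) ^ j" for j
    using order_trans[OF xs mult_left_mono[OF r \<open>M \<ge> 0\<close>]] by (simp add: power_divide)
  have geometric: "summable (\<lambda>j. M * norm y * (1/2) ^ j)"
    by (intro summable_mult summable_geometric) simp
  have "summable (\<lambda>j. norm (xs j))"
    by (rule summable_comparison_test[OF _ geometric]) (use bound in simp)
  then have "summable xs"
    by (rule summable_norm_cancel)
  have "norm (suminf xs) \<le> (\<Sum>j. norm (xs j))"
    by (rule summable_norm) fact
  also have "\<dots> \<le> (\<Sum>j. M * norm y * (1/2) ^ j)"
    by (rule suminf_le) (use bound \<open>summable (\<lambda>j. norm (xs j))\<close> geometric in simp_all)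
  also have "\<dots> = 2 * M * norm y"
    by (simp add: suminf_mult suminf_geometric)
  finally have norm_suminf: "norm (suminf xs) \<le> 2 * M * norm y" .
  have "r \<longlonglongrightarrow> 0"
    by (rule Lim_null_comparison[of _ "\<lambda>j. norm y / 2 ^ j"])
      (use r in \<open>auto intro: always_eventually LIMSEQ_divide_realpow_zero\<close>)
  moreover have "T (\<Sum>j<m. xs j) = y - r m" for m
    by (induction m) (simp_all add: r_0 r_Suc T.add)
  ultimately have "(\<lambda>m. T (\<Sum>j<m. xs j)) \<longlonglongrightarrow> y - 0"
    by (simp only:) (intro tendsto_intros)
  then have "T (suminf xs) = y"
    using LIMSEQ_unique[OF T.tendsto[OF summable_LIMSEQ[OF \<open>summable xs\<close>]]] by (simp add: T.sum)
  with norm_suminf show ?thesis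
    by blast
qed

lemma closed_range_bounded_preimage:
  fixes T :: "'a::banach \<Rightarrow> 'b::banach"
  assumes "bounded_linear T" and "closed (range T)"
  obtains C where "\<And>y. y \<in> range T \<Longrightarrow> \<exists>x. T x = y \<and> norm x \<le> C * norm y"
proof -
  obtain M where approx:
    "\<And>y \<eta>. y \<in> range T \<Longrightarrow> \<eta> > 0 \<Longrightarrow> \<exists>x. norm x \<le> M * norm y \<and> norm (y - T x) < \<eta>"
    using closed_range_approximate_preimage[OF assms] by blast
  show ?thesis
    by (rule that, rule exact_preimage_from_approximate[OF assms(1) approx])
qed

section \<open>The Moore-Penrose inverse\<close>

definition is_mp_inverse :: "('a::chilbert_space \<Rightarrow> 'a) \<Rightarrow> ('a \<Rightarrow> 'a) \<Rightarrow> bool" where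
  "is_mp_inverse T S \<longleftrightarrow> bounded_clinear S \<and> T \<circ> S \<circ> T = T \<and> S \<circ> T \<circ> S = S \<and>
     adj (S \<circ> T) = S \<circ> T \<and> adj (T \<circ> S) = T \<circ> S"

lemma is_mp_inverse_unique:
  assumes T: "bounded_clinear T" and S1: "is_mp_inverse T S1" and S2: "is_mp_inverse T S2"
  shows "S1 = S2"
proof -
  have "bounded_clinear S1" and "bounded_clinear S2"
    using S1 S2 by (simp_all add: is_mp_inverse_def)
  then have sa: "is_adj (S1 \<circ> T) (S1 \<circ> T)" "is_adj (T \<circ> S1) (T \<circ> S1)"
    "is_adj (S2 \<circ> T) (S2 \<circ> T)" "is_adj (T \<circ> S2) (T \<circ> S2)"
    using S1 S2 T by (simp_all add: is_mp_inverse_def bounded_clinear_compose flip: adj_eq_self_iff)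
  have inv: "T (S1 (T x)) = T x" "T (S2 (T x)) = T x" "S1 (T (S1 x)) = S1 x" "S2 (T (S2 x)) = S2 x" for x
    using S1 S2 by (simp_all add: is_mp_inverse_def fun_eq_iff)
  have TS: "T (S1 x) = T (S2 x)" for x
  proof (rule cinner_eq_imp_eq_left)
    fix y
    have "cinner (T (S1 x)) y = cinner x (T (S2 (T (S1 y))))"
      using sa(2) by (simp add: is_adj_def inv)
    also have "\<dots> = cinner (T (S1 (T (S2 x)))) y"
      using sa(2,4) by (simp add: is_adj_def)
    finally show "cinner (T (S1 x)) y = cinner (T (S2 x)) y"
      by (simp add: inv)
  qed
  have ST: "S1 (T x) = S2 (T x)" for x
  proof (rule cinner_eq_imp_eq_left)
    fix y
    have "cinner (S1 (T x)) y = cinner x (S1 (T (S2 (T y))))"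
      using sa(1) by (simp add: is_adj_def inv)
    also have "\<dots> = cinner (S2 (T (S1 (T x)))) y"
      using sa(1,3) by (simp add: is_adj_def)
    finally show "cinner (S1 (T x)) y = cinner (S2 (T x)) y"
      by (simp add: inv)
  qed
  show ?thesis
  proof
    fix x
    have "S1 x = S2 (T (S1 x))"
      using inv(3) ST by metis
    also have "\<dots> = S2 x"
      using inv(4) TS by metis
    finally show "S1 x = S2 x" .
  qed
qed

lemma mp_inv_eqI: "bounded_clinear T \<Longrightarrow> is_mp_inverse T S \<Longrightarrow> mp_inv T = S"
  unfolding mp_inv_def is_mp_inverse_def[symmetric]
  by (rule the_equality) (auto intro: is_mp_inverse_unique)

lemma kernel_orthogonal_eqI:
  assumes "bounded_clinear T" and "T a = T b"
    and "\<And>u. T u = 0 \<Longrightarrow> cinner u a = 0" and "\<And>u. T u = 0 \<Longrightarrow> cinner u b = 0"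
  shows "a = b"
proof -
  have "T (a - b) = 0"
    using assms(1,2) by (simp add: bounded_clinear_diff)
  then have "cinner (a - b) (a - b) = 0"
    using assms(3,4) by (simp add: cinner_diff_right)
  then show ?thesis
    by (simp add: cinner_eq_zero_iff)
qed

lemma closed_range_orthogonal_preimage:
  fixes T :: "'a::chilbert_space \<Rightarrow> 'a"
  assumes T: "bounded_clinear T" and "closed (range T)"
  obtains C where "\<And>y. y \<in> range T \<Longrightarrow>
    \<exists>x. T x = y \<and> (\<forall>u. T u = 0 \<longrightarrow> cinner u x = 0) \<and> norm x \<le> C * norm y"
proof -
  define N where "N = {x. T x = 0}"
  have N: "csubspace N" "closed N"
    using kernel_csubspace[OF T] kernel_closed[OF T] by (simp_all add: N_def)
  obtain C where C: "\<And>y. y \<in> range T \<Longrightarrow> \<exists>x. T x = y \<and> norm x \<le> C * norm y"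
    using closed_range_bounded_preimage[OF bounded_clinear_bounded_linear[OF T] assms(2)] by blast
  have "\<exists>x. T x = y \<and> (\<forall>u. T u = 0 \<longrightarrow> cinner u x = 0) \<and> norm x \<le> C * norm y"
    if y: "y \<in> range T" for y
  proof -
    obtain x where "T x = y" and "norm x \<le> C * norm y"
      using C[OF y] by blast
    show ?thesis
    proof (intro exI conjI)
      have "T (proj N x) = 0"
        using proj_in[OF N] by (simp add: N_def)
      then show "T (x - proj N x) = y"
        using \<open>T x = y\<close> by (simp add: bounded_clinear_diff[OF T])
      show "\<forall>u. T u = 0 \<longrightarrow> cinner u (x - proj N x) = 0"
        using proj_orthogonal[OF N] by (simp add: N_def)
      show "norm (x - proj N x) \<le> C * norm y"
        using norm_diff_proj_le[OF N, of x] \<open>norm x \<le> C * norm y\<close> by linarith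
    qed
  qed
  then show ?thesis
    by (rule that)
qed

lemma kernel_orthogonal_solution_bounded_clinear:
  assumes T: "bounded_clinear T" and R: "csubspace R" "closed R"
    and TS: "\<And>y. T (S y) = proj R y" and S_orth: "\<And>u y. T u = 0 \<Longrightarrow> cinner u (S y) = 0"
    and bound: "\<And>y. norm (S y) \<le> C * norm (proj R y)"
  shows "bounded_clinear S"
proof -
  have S_eqI: "S y = x" if "T x = proj R y" and "\<And>u. T u = 0 \<Longrightarrow> cinner u x = 0" for x y
    by (rule kernel_orthogonal_eqI[OF T _ S_orth that(2)]) (simp add: TS that(1))
  have "S (a + b) = S a + S b" for a b
    by (rule S_eqI)
      (simp_all add: TS S_orth bounded_clinear_add[OF T] proj_add[OF R] cinner_add_right)
  moreover have "S (scaleC c a) = scaleC c (S a)" for c a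
    by (rule S_eqI)
      (simp_all add: TS S_orth bounded_clinear_scaleC[OF T] proj_scaleC[OF R] cinner_scaleC_right)
  moreover have "norm (S y) \<le> norm y * \<bar>C\<bar>" for y
  proof -
    have "norm (S y) \<le> \<bar>C\<bar> * norm (proj R y)"
      using bound[of y] abs_ge_self[of C] by (meson mult_right_mono norm_ge_zero order_trans)
    also have "\<dots> \<le> \<bar>C\<bar> * norm y"
      by (rule mult_left_mono[OF norm_proj_le[OF R]]) simp
    finally show ?thesis
      by (simp add: mult.commute)
  qed
  ultimately show ?thesis
    unfolding bounded_clinear_def by blast
qed

lemma closed_range_reduced_inverse:
  fixes T :: "'a::chilbert_space \<Rightarrow> 'a"
  assumes T: "bounded_clinear T" and "closed (range T)"
  obtains S where "bounded_clinear S" and "\<And>y. T (S y) = proj (range T) y"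
    and "\<And>x. S (T x) = x - proj {x. T x = 0} x" and "\<And>u y. T u = 0 \<Longrightarrow> cinner u (S y) = 0"
proof -
  define R N where "R = range T" and "N = {x. T x = 0}"
  have R: "csubspace R" "closed R" and N: "csubspace N" "closed N"
    using range_csubspace[OF T] assms(2) kernel_csubspace[OF T] kernel_closed[OF T]
    by (simp_all add: R_def N_def)
  obtain C where C: "\<And>y. y \<in> R \<Longrightarrow>
      \<exists>x. T x = y \<and> (\<forall>u. T u = 0 \<longrightarrow> cinner u x = 0) \<and> norm x \<le> C * norm y"
    using closed_range_orthogonal_preimage[OF assms] by (auto simp: R_def)
  define S where "S y = (SOME x. T x = proj R y \<and> (\<forall>u. T u = 0 \<longrightarrow> cinner u x = 0) \<and>
    norm x \<le> C * norm (proj R y))" for y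
  have S: "T (S y) = proj R y \<and> (\<forall>u. T u = 0 \<longrightarrow> cinner u (S y) = 0) \<and>
      norm (S y) \<le> C * norm (proj R y)" for y
    unfolding S_def by (rule someI_ex) (rule C[OF proj_in[OF R]])
  then have TS: "T (S y) = proj R y" and S_orth: "T u = 0 \<Longrightarrow> cinner u (S y) = 0" for u y
    by simp_all
  have ST: "S (T x) = x - proj N x" for x
  proof (rule kernel_orthogonal_eqI[OF T _ S_orth])
    have "T (proj N x) = 0"
      using proj_in[OF N] by (simp add: N_def)
    moreover have "proj R (T x) = T x"
      by (rule proj_id[OF R(1)]) (simp add: R_def)
    ultimately show "T (S (T x)) = T (x - proj N x)"
      by (simp add: TS bounded_clinear_diff[OF T])
    show "cinner u (x - proj N x) = 0" if "T u = 0" for u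
      using proj_orthogonal[OF N] that by (simp add: N_def)
  qed
  have bound: "norm (S y) \<le> C * norm (proj R y)" for y
    using S by blast
  have "bounded_clinear S"
    by (rule kernel_orthogonal_solution_bounded_clinear[OF T R TS S_orth bound])
  then show ?thesis
    by (rule that) (simp_all add: TS ST S_orth R_def N_def)
qed

lemma is_mp_inverse_mp_inv:
  assumes T: "bounded_clinear T" and "closed (range T)"
  shows "is_mp_inverse T (mp_inv T)"
proof -
  obtain S where S: "bounded_clinear S" and TS: "\<And>y. T (S y) = proj (range T) y"
    and ST: "\<And>x. S (T x) = x - proj {x. T x = 0} x"
    and S_orth: "\<And>u y. T u = 0 \<Longrightarrow> cinner u (S y) = 0"
    using closed_range_reduced_inverse[OF assms] by blast
  define R N where "R = range T" and "N = {x. T x = 0}"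
  have R: "csubspace R" "closed R" and N: "csubspace N" "closed N"
    using range_csubspace[OF T] assms(2) kernel_csubspace[OF T] kernel_closed[OF T]
    by (simp_all add: R_def N_def)
  have "proj R (T x) = T x" for x
    by (rule proj_id[OF R(1)]) (simp add: R_def)
  then have "T \<circ> S \<circ> T = T"
    by (simp add: fun_eq_iff TS flip: R_def)
  moreover have "S \<circ> T \<circ> S = S"
  proof (rule ext)
    fix y
    have "proj N (S y) = 0"
      using S_orth by (intro proj_eqI[OF N(1) csubspace_0[OF N(1)]]) (simp add: N_def)
    then show "(S \<circ> T \<circ> S) y = S y"
      by (simp add: ST flip: N_def)
  qed
  moreover have "adj (S \<circ> T) = S \<circ> T"
    by (rule adj_eqI) (simp add: is_adj_def ST cinner_diff_left cinner_diff_right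
        proj_self_adjoint[OF N, unfolded N_def])
  moreover have "adj (T \<circ> S) = T \<circ> S"
    by (rule adj_eqI) (simp add: is_adj_def TS proj_self_adjoint[OF R, unfolded R_def])
  ultimately have "is_mp_inverse T S"
    using S by (simp add: is_mp_inverse_def)
  then show ?thesis
    by (simp add: mp_inv_eqI[OF T])
qed

section \<open>Positivity of powers of n-EP operators\<close>

lemma funpow_inner_inverse:
  fixes T S :: "'a \<Rightarrow> 'a"
  assumes TST: "T \<circ> S \<circ> T = T" and comm: "T ^^ n \<circ> S = S \<circ> T ^^ n" and "1 \<le> n" "n \<le> m"
  shows "S \<circ> T ^^ Suc m = T ^^ m" and "T ^^ Suc m \<circ> S = T ^^ m"
proof -
  obtain k where n: "n = Suc k"
    using \<open>1 \<le> n\<close> by (cases n) auto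
  have left: "S \<circ> T ^^ Suc n = T ^^ n"
  proof -
    have "S \<circ> T ^^ Suc n = (S \<circ> T ^^ n) \<circ> T"
      by (simp only: funpow_Suc_right o_assoc)
    also have "\<dots> = T ^^ k \<circ> (T \<circ> S \<circ> T)"
      by (simp only: flip: comm) (simp only: n funpow_Suc_right o_assoc)
    finally show ?thesis
      by (simp only: TST n funpow_Suc_right)
  qed
  have right: "T ^^ Suc n \<circ> S = T ^^ n"
  proof -
    have "T ^^ Suc n \<circ> S = T \<circ> (T ^^ n \<circ> S)"
      by (simp only: funpow.simps(2) o_assoc)
    also have "\<dots> = (T \<circ> S \<circ> T) \<circ> T ^^ k"
      by (simp only: comm) (simp only: n funpow.simps(2) o_assoc)
    finally show ?thesis
      by (simp only: TST n funpow.simps(2))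
  qed
  have "(m - n) + Suc n = Suc m" and "Suc n + (m - n) = Suc m"
    using \<open>n \<le> m\<close> by simp_all
  then have split: "T ^^ Suc m = T ^^ (m - n) \<circ> T ^^ Suc n" "T ^^ Suc m = T ^^ Suc n \<circ> T ^^ (m - n)"
    using funpow_add[of "m - n" "Suc n" T] funpow_add[of "Suc n" "m - n" T] by simp_all
  have "S \<circ> T ^^ Suc m = (S \<circ> T ^^ Suc n) \<circ> T ^^ (m - n)"
    by (simp only: split(2) o_assoc)
  also have "\<dots> = T ^^ (n + (m - n))"
    by (simp only: left funpow_add)
  finally show "S \<circ> T ^^ Suc m = T ^^ m"
    using \<open>n \<le> m\<close> by simp
  have "T ^^ Suc m \<circ> S = T ^^ (m - n) \<circ> (T ^^ Suc n \<circ> S)"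
    by (simp only: split(1) comp_assoc)
  also have "\<dots> = T ^^ ((m - n) + n)"
    by (simp only: right funpow_add)
  finally show "T ^^ Suc m \<circ> S = T ^^ m"
    using \<open>n \<le> m\<close> by simp
qed

lemma positive_op_congruence:
  assumes "is_adj B' B" and "positive_op A"
  shows "positive_op (B' \<circ> A \<circ> B)"
  using assms by (simp add: positive_op_def is_adj_def)

lemma comp_mp_inv_eq_cdual_adj:
  assumes T: "bounded_clinear T" and "closed (range T)"
  shows "T \<circ> mp_inv T = cdual T \<circ> adj T"
proof -
  have S: "bounded_clinear (mp_inv T)" and "adj (T \<circ> mp_inv T) = T \<circ> mp_inv T"
    using is_mp_inverse_mp_inv[OF assms] by (simp_all add: is_mp_inverse_def)
  then have "is_adj (T \<circ> mp_inv T) (T \<circ> mp_inv T)"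
    using adj_eq_self_iff bounded_clinear_compose[OF T S] by blast
  moreover have "is_adj (cdual T \<circ> adj T) (T \<circ> mp_inv T)"
    unfolding cdual_def by (intro is_adj_comp is_adj_adj T S)
  ultimately show ?thesis
    by (rule is_adj_unique)
qed

lemma n_EP_power_identities:
  fixes T :: "'a::chilbert_space \<Rightarrow> 'a"
  assumes "n \<ge> 1" and T: "bounded_clinear T" and "n_EP n T"
  shows "T ^^ (2 * n - 1) \<circ> cdual T = mp_inv T \<circ> T ^^ (2 * n) \<circ> cdual T"
    and "T ^^ (2 * n) = T \<circ> (T ^^ (2 * n - 1) \<circ> cdual T) \<circ> adj T"
proof -
  have "closed (range T)" and comm: "T ^^ n \<circ> mp_inv T = mp_inv T \<circ> T ^^ n"
    using assms(3) by (simp_all add: n_EP_def)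
  have TST: "T \<circ> mp_inv T \<circ> T = T"
    using is_mp_inverse_mp_inv[OF T \<open>closed (range T)\<close>] by (simp add: is_mp_inverse_def)
  note pow = funpow_inner_inverse[OF TST comm \<open>n \<ge> 1\<close>]
  show "T ^^ (2 * n - 1) \<circ> cdual T = mp_inv T \<circ> T ^^ (2 * n) \<circ> cdual T"
    using pow(1)[of "2 * n - 1"] \<open>n \<ge> 1\<close> by (simp add: Suc_diff_le)
  have "T \<circ> (T ^^ (2 * n - 1) \<circ> cdual T) \<circ> adj T = (T \<circ> T ^^ (2 * n - 1)) \<circ> (cdual T \<circ> adj T)"
    by (simp add: o_assoc)
  also have "\<dots> = T ^^ (2 * n) \<circ> (T \<circ> mp_inv T)"
    using \<open>n \<ge> 1\<close> by (simp add: comp_mp_inv_eq_cdual_adj[OF T \<open>closed (range T)\<close>] Suc_diff_le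
        flip: funpow.simps(2))
  also have "\<dots> = T ^^ (2 * n)"
    using pow(2)[of "2 * n"] by (simp only: funpow_Suc_right o_assoc)
  finally show "T ^^ (2 * n) = T \<circ> (T ^^ (2 * n - 1) \<circ> cdual T) \<circ> adj T"
    by simp
qed

theorem mainTheorem11:
  fixes T :: "'a::chilbert_space \<Rightarrow> 'a" and n :: nat
  assumes "n \<ge> 1" and "bounded_clinear T" and "n_EP n T"
  shows "positive_op (T ^^ (2 * n)) \<longleftrightarrow> positive_op ((T ^^ (2 * n - 1)) \<circ> cdual T)"
proof
  have "closed (range T)"
    using assms(3) by (simp add: n_EP_def)
  then have "bounded_clinear (mp_inv T)"
    using is_mp_inverse_mp_inv[OF assms(2)] by (simp add: is_mp_inverse_def)
  then have "is_adj (mp_inv T) (cdual T)"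
    unfolding cdual_def by (rule is_adj_sym[OF is_adj_adj])
  moreover assume "positive_op (T ^^ (2 * n))"
  ultimately have "positive_op (mp_inv T \<circ> T ^^ (2 * n) \<circ> cdual T)"
    by (rule positive_op_congruence)
  then show "positive_op (T ^^ (2 * n - 1) \<circ> cdual T)"
    by (simp only: n_EP_power_identities(1)[OF assms])
next
  have "is_adj T (adj T)"
    by (rule is_adj_sym[OF is_adj_adj[OF assms(2)]])
  moreover assume "positive_op (T ^^ (2 * n - 1) \<circ> cdual T)"
  ultimately have "positive_op (T \<circ> (T ^^ (2 * n - 1) \<circ> cdual T) \<circ> adj T)"
    by (rule positive_op_congruence)
  then show "positive_op (T ^^ (2 * n))"
    by (simp only: n_EP_power_identities(2)[OF assms])
qed

end
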